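(* Let $E$ be a nonempty bounded subset of $M_a$ and $p\in E$, and let positive reals $r_0,r_1,r_2,\dots$ be fixed with $E\subset \mathrm{GS}^n(E,p)\cap B_{r_n}(p)$ for every $n\ge0$. Then: (i) $\mathrm{GS}^n(E,p)-p$ is a real vector space for each $n\in\mathbb N$; (ii) $\mathrm{GS}^{n-1}(E,p)\subset\mathrm{GS}^n(E,p)$ for each $n\in\mathbb N$; (iii) $\mathrm{GS}^2(E,p)=\overline{\mathrm{GS}(E,p)}$, the closure of $\mathrm{GS}(E,p)$ in $M_a$; (iv) $\Lambda(\mathrm{GS}^n(E,p))=\Lambda(\mathrm{GS}^n(E,p)\cap B_{r_n}(p))$ for all $n\in\mathbb N$.
   Context: Let $a=\{a_i\}$ be a sequence of positive reals with $\sum_i a_i^2<\infty$, $M_a=\{x\in\mathbb{R}^{\mathbb N}:\sum_i a_i^2x_i^2<\infty\}$ with inner product $\langle x,y\rangle_a=\sum_i a_i^2x_iy_i$ and norm $\|\cdot\|_a$; $B_r(x)=\{y\in M_a:\|y-x\|_a<r\}$. $e_i$ denotes the sequence with $1$ in position $i$ and $0$ elsewhere. For nonempty $A\subset M_a$, $\Lambda(A)$ is the set of $i\in\mathbb N$ for which there exist $x\in A$ and $\alpha\ne0$ with $x+\alpha e_i\in A$. For $p\in A\subset M_a$, $\mathrm{GS}(A,p)=\{p+\sum_i\alpha_i(x_i-p)\in M_a: x_i\in A,\ \alpha_i\in\mathbb R\}$, the index running over a finite or countable subset of $\mathbb N$ and infinite sums being $\|\cdot\|_a$-limits of partial sums.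 Iterates: $\mathrm{GS}^0(E,p)=E$ and $\mathrm{GS}^n(E,p)=\mathrm{GS}\big(\mathrm{GS}^{n-1}(E,p)\cap B_{r_{n-1}}(p),\,p\big)$ for $n\in\mathbb N$. *)

theory Defs
  imports "HOL-Analysis.Analysis"
begin

definition Ma :: "(nat \<Rightarrow> real) \<Rightarrow> (nat \<Rightarrow> real) set" where
  "Ma a = {x. summable (\<lambda>i. (a i)\<^sup>2 * (x i)\<^sup>2)}"

definition inner_a :: "(nat \<Rightarrow> real) \<Rightarrow> (nat \<Rightarrow> real) \<Rightarrow> (nat \<Rightarrow> real) \<Rightarrow> real" where
  "inner_a a x y = (\<Sum>i. (a i)\<^sup>2 * x i * y i)"

definition norm_a :: "(nat \<Rightarrow> real) \<Rightarrow> (nat \<Rightarrow> real) \<Rightarrow> real" where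
  "norm_a a x = sqrt (inner_a a x x)"

definition ball_a :: "(nat \<Rightarrow> real) \<Rightarrow> (nat \<Rightarrow> real) \<Rightarrow> real \<Rightarrow> (nat \<Rightarrow> real) set" where
  "ball_a a x r = {y \<in> Ma a. norm_a a (\<lambda>k. y k - x k) < r}"

definition unitv :: "nat \<Rightarrow> nat \<Rightarrow> real" where
  "unitv i = (\<lambda>k. if k = i then 1 else 0)"

definition Lambda_set :: "(nat \<Rightarrow> real) set \<Rightarrow> nat set" where
  "Lambda_set A = {i. \<exists>x\<in>A. \<exists>\<alpha>::real. \<alpha> \<noteq> 0 \<and> (\<lambda>k. x k + \<alpha> * unitv i k) \<in> A}"

(* GS(A,p): p + sum_{i in I} alpha_i (x_i - p), I a finite or countable (infinite) subset of N;
   for infinite I the sum is the norm_a-limit of the partial sums taken in the natural order of I. *)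
definition GS :: "(nat \<Rightarrow> real) \<Rightarrow> (nat \<Rightarrow> real) set \<Rightarrow> (nat \<Rightarrow> real) \<Rightarrow> (nat \<Rightarrow> real) set" where
  "GS a A p = {y \<in> Ma a. \<exists>(I::nat set) (x::nat \<Rightarrow> nat \<Rightarrow> real) (\<alpha>::nat \<Rightarrow> real).
      (\<forall>i\<in>I. x i \<in> A) \<and>
      ((finite I \<and> y = (\<lambda>k. p k + (\<Sum>i\<in>I. \<alpha> i * (x i k - p k)))) \<or>
       (infinite I \<and>
        ((\<lambda>n. norm_a a (\<lambda>k. (p k + (\<Sum>i\<in>I \<inter> {..<n}. \<alpha> i * (x i k - p k))) - y k))
           \<longlonglongrightarrow> 0)))}"

fun GSit :: "(nat \<Rightarrow> real) \<Rightarrow> (nat \<Rightarrow> real) \<Rightarrow> (nat \<Rightarrow> real) set \<Rightarrow> (nat \<Rightarrow> real) \<Rightarrow> nat \<Rightarrow> (nat \<Rightarrow> real) set" where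
  "GSit a r E p 0 = E"
| "GSit a r E p (Suc n) = GS a (GSit a r E p n \<inter> ball_a a p (r n)) p"

definition closure_a :: "(nat \<Rightarrow> real) \<Rightarrow> (nat \<Rightarrow> real) set \<Rightarrow> (nat \<Rightarrow> real) set" where
  "closure_a a S = {y \<in> Ma a. \<forall>\<epsilon>>0. \<exists>z\<in>S. norm_a a (\<lambda>k. y k - z k) < \<epsilon>}"

definition is_real_vspace :: "(nat \<Rightarrow> real) set \<Rightarrow> bool" where
  "is_real_vspace V \<longleftrightarrow> (\<lambda>k. 0) \<in> V \<and>
     (\<forall>u\<in>V. \<forall>v\<in>V. (\<lambda>k. u k + v k) \<in> V) \<and>
     (\<forall>c::real. \<forall>u\<in>V. (\<lambda>k. c * u k) \<in> V)"

end

theory Submission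
  imports Defs
begin

(* Every point of GS(A,p) is the limit of the partial sums of one series p + sum_i alpha_i (x_i - p)
   indexed by all of N, and two such series can be merged by interleaving their terms; hence
   GS(A,p) - p is a vector space. For a set W with W - p a vector space, the partial sums of such
   series stay in W, while conversely the increments of any convergent sequence in W can be
   rescaled into the ball B_r(p); hence GS(W \<inter> B_r(p), p) is the closure of W. So GS^(n+1)(E,p) is
   the closure of GS^n(E,p) for n \<ge> 1, which gives (ii) and (iii), and rescaling the increment
   alpha e_i into the ball gives (iv). *)

lemma norm_a_eq_sqrt_suminf: "norm_a a x = sqrt (\<Sum>i. (a i * x i)\<^sup>2)"
  unfolding norm_a_def inner_a_def by (simp add: power2_eq_square algebra_simps)

lemma Ma_iff_summable: "x \<in> Ma a \<longleftrightarrow> summable (\<lambda>i. (a i * x i)\<^sup>2)"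
  unfolding Ma_def by (simp add: power_mult_distrib)

lemma norm_a_nonneg: "x \<in> Ma a \<Longrightarrow> norm_a a x \<ge> 0"
  unfolding norm_a_eq_sqrt_suminf Ma_iff_summable by (simp add: suminf_nonneg)

lemma norm_a_zero [simp]: "norm_a a (\<lambda>k. 0) = 0"
  unfolding norm_a_eq_sqrt_suminf by simp

lemma norm_a_minus_commute: "norm_a a (\<lambda>k. u k - v k) = norm_a a (\<lambda>k. v k - u k)"
  unfolding norm_a_eq_sqrt_suminf by (simp add: power2_eq_square algebra_simps)

lemma Ma_add:
  assumes u: "u \<in> Ma a" and v: "v \<in> Ma a"
  shows "(\<lambda>k. u k + v k) \<in> Ma a"
proof -
  have "summable (\<lambda>i. 2 * (a i * u i)\<^sup>2 + 2 * (a i * v i)\<^sup>2)"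
    using u v unfolding Ma_iff_summable by (intro summable_add summable_mult)
  moreover have "norm ((a i * (u i + v i))\<^sup>2) \<le> 2 * (a i * u i)\<^sup>2 + 2 * (a i * v i)\<^sup>2" for i
  proof -
    have "norm ((a i * (u i + v i))\<^sup>2) = (a i * u i + a i * v i)\<^sup>2"
      by (simp add: algebra_simps)
    also have "\<dots> \<le> 2 * (a i * u i)\<^sup>2 + 2 * (a i * v i)\<^sup>2"
      using zero_le_power2[of "a i * u i - a i * v i"] unfolding power2_sum power2_diff by linarith
    finally show ?thesis .
  qed
  ultimately show ?thesis
    unfolding Ma_iff_summable by (rule summable_comparison_test'[where N = 0])
qed

lemma Ma_scale: "u \<in> Ma a \<Longrightarrow> (\<lambda>k. c * u k) \<in> Ma a"
  unfolding Ma_iff_summable by (simp add: power_mult_distrib summable_mult algebra_simps)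

lemma Ma_diff: "u \<in> Ma a \<Longrightarrow> v \<in> Ma a \<Longrightarrow> (\<lambda>k. u k - v k) \<in> Ma a"
  using Ma_add[of u a "\<lambda>k. (-1) * v k"] Ma_scale[of v a "-1"] by simp

lemma norm_a_scale:
  assumes "u \<in> Ma a"
  shows "norm_a a (\<lambda>k. c * u k) = \<bar>c\<bar> * norm_a a u"
proof -
  have "(\<Sum>i. (a i * (c * u i))\<^sup>2) = (\<Sum>i. c\<^sup>2 * (a i * u i)\<^sup>2)"
    by (simp add: power_mult_distrib algebra_simps)
  also have "\<dots> = c\<^sup>2 * (\<Sum>i. (a i * u i)\<^sup>2)"
    using assms unfolding Ma_iff_summable by (rule suminf_mult)
  finally show ?thesis
    unfolding norm_a_eq_sqrt_suminf by (simp add: real_sqrt_mult)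
qed

lemma norm_a_triangle:
  assumes u: "u \<in> Ma a" and v: "v \<in> Ma a"
  shows "norm_a a (\<lambda>k. u k + v k) \<le> norm_a a u + norm_a a v"
proof -
  let ?f = "\<lambda>i. a i * u i" and ?g = "\<lambda>i. a i * v i"
  have sums_le: "(\<Sum>i<n. (a i * w i)\<^sup>2) \<le> (\<Sum>i. (a i * w i)\<^sup>2)" if "w \<in> Ma a" for w n
    using that unfolding Ma_iff_summable by (intro sum_le_suminf) auto
  have "sqrt (\<Sum>i<n. (?f i + ?g i)\<^sup>2) \<le> norm_a a u + norm_a a v" for n
  proof -
    have "sqrt (\<Sum>i<n. (?f i + ?g i)\<^sup>2) = L2_set (\<lambda>i. ?f i + ?g i) {..<n}"
      by (simp add: L2_set_def)
    also have "\<dots> \<le> L2_set ?f {..<n} + L2_set ?g {..<n}"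
      by (rule L2_set_triangle_ineq)
    also have "\<dots> \<le> norm_a a u + norm_a a v"
      unfolding L2_set_def norm_a_eq_sqrt_suminf
      by (intro add_mono real_sqrt_le_mono sums_le u v)
    finally show ?thesis .
  qed
  moreover have "(\<lambda>n. sqrt (\<Sum>i<n. (?f i + ?g i)\<^sup>2)) \<longlonglongrightarrow> sqrt (\<Sum>i. (?f i + ?g i)\<^sup>2)"
    using Ma_add[OF u v] unfolding Ma_iff_summable
    by (intro tendsto_real_sqrt summable_LIMSEQ) (simp add: algebra_simps)
  ultimately have "sqrt (\<Sum>i. (?f i + ?g i)\<^sup>2) \<le> norm_a a u + norm_a a v"
    by (intro LIMSEQ_le_const2) auto
  then show ?thesis
    unfolding norm_a_eq_sqrt_suminf by (simp add: algebra_simps)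
qed

lemma exists_scale_norm_a_less:
  assumes "d \<in> Ma a" and "r > 0"
  shows "\<exists>c>0. norm_a a (\<lambda>k. c * d k) < r"
proof -
  define N where "N = norm_a a d"
  define c where "c = r / (N + 1)"
  have "N \<ge> 0"
    unfolding N_def using assms(1) by (rule norm_a_nonneg)
  then have "c > 0" and "c * N < r"
    using assms(2) by (simp_all add: c_def field_simps)
  moreover have "norm_a a (\<lambda>k. c * d k) = c * N"
    using norm_a_scale[OF assms(1)] \<open>c > 0\<close> by (simp add: N_def)
  ultimately show ?thesis
    by auto
qed

definition GS_partial_sum ::
    "(nat \<Rightarrow> real) \<Rightarrow> (nat \<Rightarrow> nat \<Rightarrow> real) \<Rightarrow> (nat \<Rightarrow> real) \<Rightarrow> nat \<Rightarrow> nat \<Rightarrow> real" where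
  "GS_partial_sum p x \<alpha> n = (\<lambda>k. p k + (\<Sum>i<n. \<alpha> i * (x i k - p k)))"

definition tendsto_a :: "(nat \<Rightarrow> real) \<Rightarrow> (nat \<Rightarrow> nat \<Rightarrow> real) \<Rightarrow> (nat \<Rightarrow> real) \<Rightarrow> bool" where
  "tendsto_a a S y \<longleftrightarrow> (\<lambda>n. norm_a a (\<lambda>k. S n k - y k)) \<longlonglongrightarrow> 0"

lemma GS_partial_sum_Ma:
  assumes "\<And>i. x i \<in> Ma a" and "p \<in> Ma a"
  shows "GS_partial_sum p x \<alpha> n \<in> Ma a"
proof (induction n)
  case 0
  then show ?case using assms(2) by (simp add: GS_partial_sum_def)
next
  case (Suc n)
  have "GS_partial_sum p x \<alpha> (Suc n) = (\<lambda>k. GS_partial_sum p x \<alpha> n k + \<alpha> n * (x n k - p k))"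
    by (simp add: GS_partial_sum_def add.assoc)
  then show ?case
    using Suc assms by (simp add: Ma_add Ma_scale Ma_diff)
qed

(* The finitely and infinitely indexed series of the definition of GS are padded with the
   terms 0 \<cdot> (p - p), so that one sequence of partial sums indexed by \<nat> covers both cases. *)
lemma GS_eq_series_limits:
  assumes "p \<in> A"
  shows "GS a A p =
    {y \<in> Ma a. \<exists>x \<alpha>. (\<forall>i. x i \<in> A) \<and> tendsto_a a (GS_partial_sum p x \<alpha>) y}"
proof (intro set_eqI iffI)
  fix y
  assume "y \<in> {y \<in> Ma a. \<exists>x \<alpha>. (\<forall>i. x i \<in> A) \<and> tendsto_a a (GS_partial_sum p x \<alpha>) y}"
  then obtain x \<alpha> where "y \<in> Ma a" "\<forall>i. x i \<in> A" "tendsto_a a (GS_partial_sum p x \<alpha>) y"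
    by blast
  then show "y \<in> GS a A p"
    unfolding GS_def tendsto_a_def GS_partial_sum_def
    by (intro CollectI conjI exI[of _ UNIV] exI[of _ x] exI[of _ \<alpha>]) auto
next
  fix y
  assume "y \<in> GS a A p"
  then obtain I x \<alpha> where y: "y \<in> Ma a" and xA: "\<forall>i\<in>I. x i \<in> A" and
    series: "(finite I \<and> y = (\<lambda>k. p k + (\<Sum>i\<in>I. \<alpha> i * (x i k - p k)))) \<or>
       (infinite I \<and>
        ((\<lambda>n. norm_a a (\<lambda>k. (p k + (\<Sum>i\<in>I \<inter> {..<n}. \<alpha> i * (x i k - p k))) - y k))
           \<longlonglongrightarrow> 0))"
    unfolding GS_def by blast
  define x' where "x' i = (if i \<in> I then x i else p)" for i
  define \<alpha>' where "\<alpha>' i = (if i \<in> I then \<alpha> i else 0)" for i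
  have partial_sum: "GS_partial_sum p x' \<alpha>' n =
      (\<lambda>k. p k + (\<Sum>i\<in>I \<inter> {..<n}. \<alpha> i * (x i k - p k)))" for n
    unfolding GS_partial_sum_def Int_commute[of I]
    by (auto simp: x'_def \<alpha>'_def sum.inter_restrict fun_eq_iff intro!: sum.cong)
  have "tendsto_a a (GS_partial_sum p x' \<alpha>') y"
    using series
  proof
    assume finite: "finite I \<and> y = (\<lambda>k. p k + (\<Sum>i\<in>I. \<alpha> i * (x i k - p k)))"
    then obtain N where "I \<subseteq> {..<N}"
      using finite_nat_bounded by blast
    then have "\<forall>n\<ge>N. I \<inter> {..<n} = I"
      by auto
    then have "\<forall>\<^sub>F n in sequentially. norm_a a (\<lambda>k. GS_partial_sum p x' \<alpha>' n k - y k) = 0"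
      using finite unfolding eventually_sequentially partial_sum by (intro exI[of _ N]) auto
    then show ?thesis
      unfolding tendsto_a_def by (rule tendsto_eventually)
  qed (simp add: tendsto_a_def partial_sum)
  moreover have "\<forall>i. x' i \<in> A"
    using xA assms by (simp add: x'_def)
  ultimately show "y \<in> {y \<in> Ma a. \<exists>x \<alpha>. (\<forall>i. x i \<in> A) \<and> tendsto_a a (GS_partial_sum p x \<alpha>) y}"
    using y by blast
qed

lemma GS_memI:
  assumes "p \<in> A" "y \<in> Ma a" "\<And>i. x i \<in> A" "tendsto_a a (GS_partial_sum p x \<alpha>) y"
  shows "y \<in> GS a A p"
  unfolding GS_eq_series_limits[OF \<open>p \<in> A\<close>]
  using assms(2-) by (intro CollectI conjI exI[of _ x] exI[of _ \<alpha>]) auto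

lemma GS_subset_Ma: "GS a A p \<subseteq> Ma a"
  unfolding GS_def by blast

definition flat_through :: "(nat \<Rightarrow> real) set \<Rightarrow> (nat \<Rightarrow> real) \<Rightarrow> bool" where
  "flat_through W p \<longleftrightarrow> p \<in> W \<and> (\<forall>u\<in>W. \<forall>v\<in>W. (\<lambda>k. u k + v k - p k) \<in> W) \<and>
     (\<forall>c. \<forall>u\<in>W. (\<lambda>k. p k + c * (u k - p k)) \<in> W)"

lemma flat_through_center: "flat_through W p \<Longrightarrow> p \<in> W"
  unfolding flat_through_def by blast

lemma flat_through_add:
  "flat_through W p \<Longrightarrow> u \<in> W \<Longrightarrow> v \<in> W \<Longrightarrow> (\<lambda>k. u k + v k - p k) \<in> W"
  unfolding flat_through_def by blast

lemma flat_through_scale: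
  "flat_through W p \<Longrightarrow> u \<in> W \<Longrightarrow> (\<lambda>k. p k + c * (u k - p k)) \<in> W"
  unfolding flat_through_def by blast

lemma flat_through_diff:
  assumes W: "flat_through W p" and "u \<in> W" "v \<in> W"
  shows "(\<lambda>k. p k + c * (u k - v k)) \<in> W"
proof -
  have "(\<lambda>k. u k + (p k + (-1) * (v k - p k)) - p k) \<in> W"
    using assms by (intro flat_through_add flat_through_scale)
  then have "(\<lambda>k. p k + c * ((u k + (p k + (-1) * (v k - p k)) - p k) - p k)) \<in> W"
    by (rule flat_through_scale[OF W])
  then show ?thesis
    by (simp add: algebra_simps)
qed

lemma flat_through_is_real_vspace:
  assumes W: "flat_through W p"
  shows "is_real_vspace ((\<lambda>y k. y k - p k) ` W)"
  unfolding is_real_vspace_def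
proof (intro conjI ballI allI)
  show "(\<lambda>k. 0) \<in> (\<lambda>y k. y k - p k) ` W"
    using flat_through_center[OF W] by (intro image_eqI[of _ _ p]) auto
next
  fix u v
  assume "u \<in> (\<lambda>y k. y k - p k) ` W" "v \<in> (\<lambda>y k. y k - p k) ` W"
  then obtain u' v' where "u' \<in> W" "v' \<in> W" "u = (\<lambda>k. u' k - p k)" "v = (\<lambda>k. v' k - p k)"
    by blast
  then show "(\<lambda>k. u k + v k) \<in> (\<lambda>y k. y k - p k) ` W"
    using flat_through_add[OF W] by (intro image_eqI[of _ _ "\<lambda>k. u' k + v' k - p k"]) auto
next
  fix c u
  assume "u \<in> (\<lambda>y k. y k - p k) ` W"
  then obtain u' where "u' \<in> W" "u = (\<lambda>k. u' k - p k)"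
    by blast
  then show "(\<lambda>k. c * u k) \<in> (\<lambda>y k. y k - p k) ` W"
    using flat_through_scale[OF W] by (intro image_eqI[of _ _ "\<lambda>k. p k + c * (u' k - p k)"]) auto
qed

lemma GS_partial_sum_in_flat:
  assumes W: "flat_through W p" and x: "\<And>i. x i \<in> W"
  shows "GS_partial_sum p x \<alpha> n \<in> W"
proof (induction n)
  case 0
  then show ?case
    using flat_through_center[OF W] by (simp add: GS_partial_sum_def)
next
  case (Suc n)
  have "(\<lambda>k. GS_partial_sum p x \<alpha> n k + (p k + \<alpha> n * (x n k - p k)) - p k) \<in> W"
    using W Suc x by (intro flat_through_add flat_through_scale)
  then show ?case
    by (simp add: GS_partial_sum_def)
qed

lemma flat_through_diff_in_ball:
  assumes "W \<subseteq> Ma a" and W: "flat_through W p" and "u \<in> W" "v \<in> W" and "r > 0"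
  shows "\<exists>c>0. (\<lambda>k. p k + c * (u k - v k)) \<in> W \<inter> ball_a a p r"
proof -
  have "(\<lambda>k. u k - v k) \<in> Ma a"
    using assms by (intro Ma_diff) auto
  then obtain c where "c > 0" and "norm_a a (\<lambda>k. c * (u k - v k)) < r"
    using exists_scale_norm_a_less \<open>r > 0\<close> by blast
  moreover have "(\<lambda>k. p k + c * (u k - v k)) \<in> W"
    using assms by (intro flat_through_diff)
  ultimately show ?thesis
    using \<open>W \<subseteq> Ma a\<close> unfolding ball_a_def by auto
qed

lemma tendsto_a_affine_add:
  assumes S: "tendsto_a a S y" and T: "tendsto_a a T z"
    and "\<And>n. S n \<in> Ma a" "\<And>n. T n \<in> Ma a" "y \<in> Ma a" "z \<in> Ma a"
  shows "tendsto_a a (\<lambda>n k. S n k + T n k - p k) (\<lambda>k. y k + z k - p k)"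
proof -
  have split: "(\<lambda>k. (S n k + T n k - p k) - (y k + z k - p k)) =
      (\<lambda>k. (S n k - y k) + (T n k - z k))" for n
    by (simp add: algebra_simps)
  have Sy: "(\<lambda>k. S n k - y k) \<in> Ma a" and Tz: "(\<lambda>k. T n k - z k) \<in> Ma a" for n
    using assms by (simp_all add: Ma_diff)
  have "(\<lambda>n. norm_a a (\<lambda>k. (S n k - y k) + (T n k - z k))) \<longlonglongrightarrow> 0"
  proof (rule tendsto_sandwich)
    show "\<forall>\<^sub>F n in sequentially. 0 \<le> norm_a a (\<lambda>k. (S n k - y k) + (T n k - z k))"
      using Sy Tz by (simp add: norm_a_nonneg Ma_add)
    show "\<forall>\<^sub>F n in sequentially. norm_a a (\<lambda>k. (S n k - y k) + (T n k - z k)) \<le>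
        norm_a a (\<lambda>k. S n k - y k) + norm_a a (\<lambda>k. T n k - z k)"
      using Sy Tz by (simp add: norm_a_triangle)
    show "(\<lambda>n. norm_a a (\<lambda>k. S n k - y k) + norm_a a (\<lambda>k. T n k - z k)) \<longlonglongrightarrow> 0"
      using S T unfolding tendsto_a_def by (rule tendsto_add_zero)
  qed simp
  then show ?thesis
    unfolding tendsto_a_def split .
qed

lemma tendsto_a_affine_scale:
  assumes S: "tendsto_a a S y" and "\<And>n. S n \<in> Ma a" "y \<in> Ma a"
  shows "tendsto_a a (\<lambda>n k. p k + c * (S n k - p k)) (\<lambda>k. p k + c * (y k - p k))"
proof -
  have "(\<lambda>k. (p k + c * (S n k - p k)) - (p k + c * (y k - p k))) = (\<lambda>k. c * (S n k - y k))" for n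
    by (simp add: algebra_simps)
  moreover have "norm_a a (\<lambda>k. c * (S n k - y k)) = \<bar>c\<bar> * norm_a a (\<lambda>k. S n k - y k)" for n
    using assms by (simp add: norm_a_scale Ma_diff)
  moreover have "(\<lambda>n. \<bar>c\<bar> * norm_a a (\<lambda>k. S n k - y k)) \<longlonglongrightarrow> \<bar>c\<bar> * 0"
    using S unfolding tendsto_a_def by (intro tendsto_mult tendsto_const)
  ultimately show ?thesis
    unfolding tendsto_a_def by simp
qed

lemma tendsto_a_reindex:
  "tendsto_a a S y \<Longrightarrow> filterlim f sequentially sequentially \<Longrightarrow> tendsto_a a (\<lambda>n. S (f n)) y"
  unfolding tendsto_a_def by (rule filterlim_compose)

lemma sum_interleave:
  fixes f g :: "nat \<Rightarrow> 'a::comm_monoid_add"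
  shows "(\<Sum>j<n. if even j then f (j div 2) else g (j div 2)) =
    (\<Sum>i<Suc n div 2. f i) + (\<Sum>i<n div 2. g i)"
proof (induction n)
  case 0
  then show ?case by simp
next
  case (Suc n)
  show ?case
  proof (cases "even n")
    case True
    then have "Suc (Suc n) div 2 = Suc (Suc n div 2)" "Suc n div 2 = n div 2"
      by presburger+
    then show ?thesis
      using Suc True by (simp add: add_ac)
  next
    case False
    then have "Suc (Suc n) div 2 = Suc n div 2" "Suc n div 2 = Suc (n div 2)"
      by presburger+
    then show ?thesis
      using Suc False by (simp add: add_ac)
  qed
qed

lemma GS_partial_sum_interleave:
  "GS_partial_sum p (\<lambda>j. if even j then x (j div 2) else y (j div 2))
      (\<lambda>j. if even j then \<alpha> (j div 2) else \<beta> (j div 2)) n =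
    (\<lambda>k. GS_partial_sum p x \<alpha> (Suc n div 2) k + GS_partial_sum p y \<beta> (n div 2) k - p k)"
proof
  fix k
  have "(\<Sum>j<n. (if even j then \<alpha> (j div 2) else \<beta> (j div 2)) *
        ((if even j then x (j div 2) else y (j div 2)) k - p k)) =
      (\<Sum>j<n. if even j then \<alpha> (j div 2) * (x (j div 2) k - p k)
        else \<beta> (j div 2) * (y (j div 2) k - p k))"
    by (intro sum.cong) auto
  then show "GS_partial_sum p (\<lambda>j. if even j then x (j div 2) else y (j div 2))
      (\<lambda>j. if even j then \<alpha> (j div 2) else \<beta> (j div 2)) n k =
    GS_partial_sum p x \<alpha> (Suc n div 2) k + GS_partial_sum p y \<beta> (n div 2) k - p k"
    using sum_interleave[of "\<lambda>i. \<alpha> i * (x i k - p k)" "\<lambda>i. \<beta> i * (y i k - p k)" n]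
    unfolding GS_partial_sum_def by simp
qed

lemma center_mem_GS:
  assumes "A \<subseteq> Ma a" and "p \<in> A"
  shows "p \<in> GS a A p"
proof -
  have "tendsto_a a (GS_partial_sum p (\<lambda>_. p) (\<lambda>_. 0)) p"
    by (simp add: tendsto_a_def GS_partial_sum_def)
  then show ?thesis
    using assms by (intro GS_memI) auto
qed

lemma GS_affine_add:
  assumes A: "A \<subseteq> Ma a" and pA: "p \<in> A" and "u \<in> GS a A p" "v \<in> GS a A p"
  shows "(\<lambda>k. u k + v k - p k) \<in> GS a A p"
proof -
  note GS_series = GS_eq_series_limits[OF pA]
  obtain x \<alpha> where u: "u \<in> Ma a" "\<forall>i. x i \<in> A" "tendsto_a a (GS_partial_sum p x \<alpha>) u"
    using \<open>u \<in> GS a A p\<close> unfolding GS_series by blast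
  obtain y \<beta> where v: "v \<in> Ma a" "\<forall>i. y i \<in> A" "tendsto_a a (GS_partial_sum p y \<beta>) v"
    using \<open>v \<in> GS a A p\<close> unfolding GS_series by blast
  have pM: "p \<in> Ma a"
    using A pA by auto
  have "filterlim (\<lambda>n. Suc n div 2) sequentially sequentially"
    by (rule filterlim_compose[OF filterlim_at_top_div_const_nat filterlim_Suc]) simp
  then have x_half: "tendsto_a a (\<lambda>n. GS_partial_sum p x \<alpha> (Suc n div 2)) u"
    by (rule tendsto_a_reindex[OF u(3)])
  have "filterlim (\<lambda>n. n div 2) sequentially sequentially"
    by (rule filterlim_at_top_div_const_nat) simp
  then have y_half: "tendsto_a a (\<lambda>n. GS_partial_sum p y \<beta> (n div 2)) v"
    by (rule tendsto_a_reindex[OF v(3)])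
  have "tendsto_a a (\<lambda>n k. GS_partial_sum p x \<alpha> (Suc n div 2) k +
      GS_partial_sum p y \<beta> (n div 2) k - p k) (\<lambda>k. u k + v k - p k)"
    using u v A pM
    by (intro tendsto_a_affine_add[OF x_half y_half] GS_partial_sum_Ma) auto
  then have "tendsto_a a (GS_partial_sum p (\<lambda>j. if even j then x (j div 2) else y (j div 2))
      (\<lambda>j. if even j then \<alpha> (j div 2) else \<beta> (j div 2))) (\<lambda>k. u k + v k - p k)"
    unfolding GS_partial_sum_interleave .
  moreover have "(\<lambda>k. u k + v k - p k) \<in> Ma a"
    using u v pM by (simp add: Ma_add Ma_diff)
  ultimately show ?thesis
    using pA u v by (intro GS_memI) auto
qed

lemma GS_affine_scale:
  assumes A: "A \<subseteq> Ma a" and pA: "p \<in> A" and "u \<in> GS a A p"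
  shows "(\<lambda>k. p k + c * (u k - p k)) \<in> GS a A p"
proof -
  note GS_series = GS_eq_series_limits[OF pA]
  obtain x \<alpha> where u: "u \<in> Ma a" "\<forall>i. x i \<in> A" "tendsto_a a (GS_partial_sum p x \<alpha>) u"
    using \<open>u \<in> GS a A p\<close> unfolding GS_series by blast
  have pM: "p \<in> Ma a"
    using A pA by auto
  have "GS_partial_sum p x (\<lambda>i. c * \<alpha> i) =
      (\<lambda>n k. p k + c * (GS_partial_sum p x \<alpha> n k - p k))"
    by (simp add: fun_eq_iff GS_partial_sum_def sum_distrib_left algebra_simps)
  moreover have "tendsto_a a (\<lambda>n k. p k + c * (GS_partial_sum p x \<alpha> n k - p k))
      (\<lambda>k. p k + c * (u k - p k))"
    using u A pM by (intro tendsto_a_affine_scale GS_partial_sum_Ma) auto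
  moreover have "(\<lambda>k. p k + c * (u k - p k)) \<in> Ma a"
    using u pM by (simp add: Ma_add Ma_scale Ma_diff)
  ultimately show ?thesis
    using pA u by (intro GS_memI[where x = x and \<alpha> = "\<lambda>i. c * \<alpha> i"]) auto
qed

lemma flat_through_GS:
  assumes "A \<subseteq> Ma a" and "p \<in> A"
  shows "flat_through (GS a A p) p"
  unfolding flat_through_def using assms by (simp add: center_mem_GS GS_affine_add GS_affine_scale)

lemma center_mem_ball_a: "p \<in> Ma a \<Longrightarrow> r > 0 \<Longrightarrow> p \<in> ball_a a p r"
  by (simp add: ball_a_def)

lemma subset_closure_a: "W \<subseteq> Ma a \<Longrightarrow> W \<subseteq> closure_a a W"
  unfolding closure_a_def by (auto intro!: bexI)

lemma closure_a_iff_tendsto_a: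
  assumes "W \<subseteq> Ma a"
  shows "y \<in> closure_a a W \<longleftrightarrow> y \<in> Ma a \<and> (\<exists>z. (\<forall>n. z n \<in> W) \<and> tendsto_a a z y)"
proof
  assume y: "y \<in> closure_a a W"
  then have "\<forall>n. \<exists>z\<in>W. norm_a a (\<lambda>k. y k - z k) < inverse (real (Suc n))"
    unfolding closure_a_def by auto
  then obtain z where z: "\<And>n. z n \<in> W" "\<And>n. norm_a a (\<lambda>k. y k - z n k) < inverse (real (Suc n))"
    by metis
  have "(\<lambda>n. norm_a a (\<lambda>k. z n k - y k)) \<longlonglongrightarrow> 0"
  proof (rule tendsto_sandwich[OF _ _ tendsto_const LIMSEQ_inverse_real_of_nat])
    show "\<forall>\<^sub>F n in sequentially. 0 \<le> norm_a a (\<lambda>k. z n k - y k)"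
      using z(1) y assms unfolding closure_a_def by (auto intro!: always_eventually norm_a_nonneg Ma_diff)
    show "\<forall>\<^sub>F n in sequentially. norm_a a (\<lambda>k. z n k - y k) \<le> inverse (real (Suc n))"
      using z(2) by (simp add: norm_a_minus_commute less_imp_le)
  qed
  then show "y \<in> Ma a \<and> (\<exists>z. (\<forall>n. z n \<in> W) \<and> tendsto_a a z y)"
    using y z(1) unfolding closure_a_def tendsto_a_def by auto
next
  assume "y \<in> Ma a \<and> (\<exists>z. (\<forall>n. z n \<in> W) \<and> tendsto_a a z y)"
  then obtain z where y: "y \<in> Ma a" and z: "\<And>n. z n \<in> W"
    and lim: "(\<lambda>n. norm_a a (\<lambda>k. z n k - y k)) \<longlonglongrightarrow> 0"
    unfolding tendsto_a_def by blast
  show "y \<in> closure_a a W"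
    unfolding closure_a_def
  proof (intro CollectI conjI allI impI y)
    fix e :: real
    assume "e > 0"
    then obtain n where "\<bar>norm_a a (\<lambda>k. z n k - y k)\<bar> < e"
      using LIMSEQ_D[OF lim] by fastforce
    then show "\<exists>z\<in>W. norm_a a (\<lambda>k. y k - z k) < e"
      using z by (metis abs_less_iff norm_a_minus_commute)
  qed
qed

lemma GS_subset_closure_a:
  assumes "W \<subseteq> Ma a" and W: "flat_through W p" and "A \<subseteq> W" and "p \<in> A"
  shows "GS a A p \<subseteq> closure_a a W"
proof
  fix y
  assume "y \<in> GS a A p"
  then obtain x \<alpha> where "y \<in> Ma a" "\<forall>i. x i \<in> A" "tendsto_a a (GS_partial_sum p x \<alpha>) y"
    unfolding GS_eq_series_limits[OF \<open>p \<in> A\<close>] by blast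
  moreover have "GS_partial_sum p x \<alpha> n \<in> W" if "\<forall>i. x i \<in> A" for n
    using that \<open>A \<subseteq> W\<close> by (intro GS_partial_sum_in_flat[OF W]) auto
  ultimately show "y \<in> closure_a a W"
    unfolding closure_a_iff_tendsto_a[OF \<open>W \<subseteq> Ma a\<close>] by blast
qed

(* With z(0) = p, the points x(n) = p + c(n) (z(n+1) - z(n)) lie in W \<inter> B_r(p) for suitable
   c(n) > 0, and the series with coefficients 1 / c(n) telescopes to z(n). *)
lemma closure_a_subset_GS_inter_ball:
  assumes WM: "W \<subseteq> Ma a" and W: "flat_through W p" and "r > 0"
  shows "closure_a a W \<subseteq> GS a (W \<inter> ball_a a p r) p"
proof
  fix y
  assume "y \<in> closure_a a W"
  then obtain z where y: "y \<in> Ma a" and z: "\<forall>n. z n \<in> W" and lim: "tendsto_a a z y"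
    unfolding closure_a_iff_tendsto_a[OF WM] by blast
  define z' where "z' = case_nat p z"
  have z'W: "z' n \<in> W" for n
    using z flat_through_center[OF W] by (cases n) (simp_all add: z'_def)
  have "\<forall>i. \<exists>c>0. (\<lambda>k. p k + c * (z' (Suc i) k - z' i k)) \<in> W \<inter> ball_a a p r"
    using flat_through_diff_in_ball[OF WM W z'W z'W \<open>r > 0\<close>] by blast
  then obtain c where c_pos: "\<And>i. c i > 0"
    and c_ball: "\<And>i. (\<lambda>k. p k + c i * (z' (Suc i) k - z' i k)) \<in> W \<inter> ball_a a p r"
    by metis
  define x where "x i = (\<lambda>k. p k + c i * (z' (Suc i) k - z' i k))" for i
  define \<alpha> where "\<alpha> i = 1 / c i" for i
  have "\<alpha> i * (x i k - p k) = z' (Suc i) k - z' i k" for i k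
    using c_pos[of i] by (simp add: \<alpha>_def x_def)
  then have telescope: "(\<Sum>i<n. \<alpha> i * (x i k - p k)) = z' n k - z' 0 k" for n k
    using sum_lessThan_telescope[of "\<lambda>i. z' i k" n] by simp
  have "GS_partial_sum p x \<alpha> n k = z' n k" for n k
    unfolding GS_partial_sum_def telescope by (simp add: z'_def)
  then have "GS_partial_sum p x \<alpha> = z'"
    by (intro ext)
  moreover have "tendsto_a a z' y"
    using lim unfolding tendsto_a_def by (subst filterlim_sequentially_Suc[symmetric]) (simp add: z'_def)
  moreover have "p \<in> W \<inter> ball_a a p r"
    using flat_through_center[OF W] WM \<open>r > 0\<close> by (auto intro: center_mem_ball_a)
  ultimately show "y \<in> GS a (W \<inter> ball_a a p r) p"
    using y c_ball by (intro GS_memI[where x = x and \<alpha> = \<alpha>]) (auto simp: x_def)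
qed

lemma GS_inter_ball_eq_closure_a:
  assumes "W \<subseteq> Ma a" and W: "flat_through W p" and "r > 0"
  shows "GS a (W \<inter> ball_a a p r) p = closure_a a W"
proof
  show "closure_a a W \<subseteq> GS a (W \<inter> ball_a a p r) p"
    using assms by (rule closure_a_subset_GS_inter_ball)
  have "p \<in> W \<inter> ball_a a p r"
    using assms flat_through_center[OF W] by (auto intro: center_mem_ball_a)
  then show "GS a (W \<inter> ball_a a p r) p \<subseteq> closure_a a W"
    using assms by (intro GS_subset_closure_a) auto
qed

lemma Lambda_set_flat_through_inter_ball:
  assumes WM: "W \<subseteq> Ma a" and W: "flat_through W p" and "r > 0"
  shows "Lambda_set W = Lambda_set (W \<inter> ball_a a p r)"
proof
  show "Lambda_set (W \<inter> ball_a a p r) \<subseteq> Lambda_set W"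
    unfolding Lambda_set_def by blast
  show "Lambda_set W \<subseteq> Lambda_set (W \<inter> ball_a a p r)"
  proof
    fix i
    assume "i \<in> Lambda_set W"
    then obtain x \<alpha> where "x \<in> W" "\<alpha> \<noteq> 0" "(\<lambda>k. x k + \<alpha> * unitv i k) \<in> W"
      unfolding Lambda_set_def by blast
    then obtain c where "c > 0"
      and "(\<lambda>k. p k + c * ((x k + \<alpha> * unitv i k) - x k)) \<in> W \<inter> ball_a a p r"
      using flat_through_diff_in_ball[OF WM W _ _ \<open>r > 0\<close>] by blast
    then have "c * \<alpha> \<noteq> 0" and "(\<lambda>k. p k + c * \<alpha> * unitv i k) \<in> W \<inter> ball_a a p r"
      using \<open>\<alpha> \<noteq> 0\<close> by (simp_all add: mult.assoc)
    moreover have "p \<in> W \<inter> ball_a a p r"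
      using flat_through_center[OF W] WM \<open>r > 0\<close> by (auto intro: center_mem_ball_a)
    ultimately show "i \<in> Lambda_set (W \<inter> ball_a a p r)"
      unfolding Lambda_set_def by blast
  qed
qed

lemma GSit_subset_Ma: "E \<subseteq> Ma a \<Longrightarrow> GSit a r E p n \<subseteq> Ma a"
  by (cases n) (simp_all add: GS_subset_Ma)

lemma flat_through_GSit:
  assumes "E \<subseteq> Ma a" and "p \<in> GSit a r E p m \<inter> ball_a a p (r m)"
  shows "flat_through (GSit a r E p (Suc m)) p"
  unfolding GSit.simps using assms GSit_subset_Ma[OF assms(1), of r p m] by (intro flat_through_GS) auto

theorem lemma3p13:
  fixes a :: "nat \<Rightarrow> real" and E :: "(nat \<Rightarrow> real) set" and p :: "nat \<Rightarrow> real"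
    and r :: "nat \<Rightarrow> real"
  assumes a_pos: "\<And>i. a i > 0"
    and a_sq: "summable (\<lambda>i. (a i)\<^sup>2)"
    and E_sub: "E \<subseteq> Ma a"
    and E_ne: "E \<noteq> {}"
    and E_bdd: "\<exists>C. \<forall>x\<in>E. norm_a a x \<le> C"
    and pE: "p \<in> E"
    and r_pos: "\<And>n. r n > 0"
    and E_in: "\<And>n. E \<subseteq> GSit a r E p n \<inter> ball_a a p (r n)"
  shows "(\<forall>n\<ge>1. is_real_vspace ((\<lambda>y. (\<lambda>k. y k - p k)) ` GSit a r E p n))
       \<and> (\<forall>n\<ge>1. GSit a r E p (n - 1) \<subseteq> GSit a r E p n)
       \<and> GSit a r E p 2 = closure_a a (GS a E p)
       \<and> (\<forall>n\<ge>1. Lambda_set (GSit a r E p n) = Lambda_set (GSit a r E p n \<inter> ball_a a p (r n)))"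
proof -
  let ?G = "GSit a r E p"
  have G_Ma: "?G n \<subseteq> Ma a" for n
    using E_sub by (rule GSit_subset_Ma)
  have flat: "flat_through (?G n) p" if "n \<ge> 1" for n
    using flat_through_GSit[OF E_sub, of p r "n - 1"] E_in pE that by auto
  have G_Suc: "?G (Suc n) = closure_a a (?G n)" if "n \<ge> 1" for n
    using GS_inter_ball_eq_closure_a[OF G_Ma flat[OF that] r_pos] by simp
  have "?G (n - 1) \<subseteq> ?G n" if "n \<ge> 1" for n
    using E_in[of 1] G_Suc[of "n - 1"] subset_closure_a[OF G_Ma] that by (cases "n = 1") auto
  moreover have "?G 2 = closure_a a (GS a E p)"
    using E_in[of 0] G_Suc[of 1] by (simp add: numeral_2_eq_2 Int_absorb2)
  ultimately show ?thesis
    using flat flat_through_is_real_vspace Lambda_set_flat_through_inter_ball[OF G_Ma flat r_pos]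
    by auto
qed

end
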